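(* Every sequential transduction belongs to $\mathsf{Lex}_1$.
   Context: A sequential transducer over alphabets $\Sigma,\Gamma$ is a deterministic finite automaton $A=(Q,q_0,F,\delta)$ over $\Sigma$ together with an output function $\mu:\mathrm{dom}(\delta)\to\Gamma^*$. The transduction it computes is defined exactly on $L(A)$, mapping $u$ to the concatenation of the outputs $\mu(q,\sigma)$ along the run of $A$ on $u$. A sequential transduction is one computed by a sequential transducer. Alphabets are finite. For words $u,v$ of equal length over alphabets $\Sigma_1,\Sigma_2$, $u\otimes v$ is the word over $\Sigma_1\times\Sigma_2$ with $(u\otimes v)[i]=(u[i],v[i])$. A transduction is a partial function $f:\Sigma^*\rightharpoonup\Gamma^*$. A simple transduction is a transduction $f=\sum_{i=1}^n L_i\triangleright w_i$, where $L_1,\dots,L_n\subseteq\Sigma^*$ are pairwise disjoint regular languages and each $w_i\in\Gamma^{\le 1}$ is a word of length at most 1. It satisfies $f(u)=w_i$ if $u\in L_i$, and $f(u)$ is undefined if $u\notin\bigcup_iL_i$. An ordered alphabet is a pair $\lambda=(B,\prec)$ with $B$ a finite set and $\prec$ a strict linear order on $B$. The order is extended to $B^n$ for each $n$ by: $u\prec v$ iff there is $i\le n$ with $u[i]\prec v[i]$ and $u[j]=v[j]$ for all $i<j\le n$ (most significant letter on the right). For a transduction $f:(\Sigma\times B)^*\rightharpoonup\Gamma^*$, the transduction $\mathsf{maplex}_\lambda f:\Sigma^*\rightharpoonup\Gamma^*$ maps $u$ to $f(u\otimes b_1)f(u\otimes b_2)\cdots f(u\otimes b_m)$, where $b_1\prec\cdots\prec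 b_m$ is the increasing enumeration of all of $B^{|u|}$. It is defined on $u$ iff every $f(u\otimes b_j)$ is defined. $\mathsf{Lex}_1$ is the class of transductions $\mathsf{maplex}_\lambda f$ with $\lambda=(B,\prec)$ an ordered alphabet and $f:(\Sigma\times B)^*\rightharpoonup\Gamma^*$ a simple transduction. *)

theory Defs
  imports Main
begin

definition seq_transducer ::
  "'q set \<Rightarrow> 'q \<Rightarrow> 'q set \<Rightarrow> ('q \<Rightarrow> 'a \<Rightarrow> 'q option) \<Rightarrow> bool" where
  "seq_transducer Q q0 F \<delta> \<longleftrightarrow>
     finite Q \<and> q0 \<in> Q \<and> F \<subseteq> Q \<and>
     (\<forall>q\<in>Q. \<forall>a q'. \<delta> q a = Some q' \<longrightarrow> q' \<in> Q)"

text \<open>The output function mu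
  is only consulted on the domain of delta.\<close>

fun seq_run ::
  "('q \<Rightarrow> 'a \<Rightarrow> 'q option) \<Rightarrow> ('q \<Rightarrow> 'a \<Rightarrow> 'g list) \<Rightarrow> 'q \<Rightarrow> 'a list
     \<Rightarrow> ('q \<times> 'g list) option" where
  "seq_run \<delta> \<mu> q [] = Some (q, [])"
| "seq_run \<delta> \<mu> q (a # u) =
     (case \<delta> q a of
        None \<Rightarrow> None
      | Some q' \<Rightarrow> (case seq_run \<delta> \<mu> q' u of
                     None \<Rightarrow> None
                   | Some (p, w) \<Rightarrow> Some (p, \<mu> q a @ w)))"

definition seq_transduction ::
  "'q \<Rightarrow> 'q set \<Rightarrow> ('q \<Rightarrow> 'a \<Rightarrow> 'q option) \<Rightarrow> ('q \<Rightarrow> 'a \<Rightarrow> 'g list)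
     \<Rightarrow> 'a list \<Rightarrow> 'g list option" where
  "seq_transduction q0 F \<delta> \<mu> u =
     (case seq_run \<delta> \<mu> q0 u of
        None \<Rightarrow> None
      | Some (p, w) \<Rightarrow> (if p \<in> F then Some w else None))"

definition regular_on :: "'c set \<Rightarrow> 'c list set \<Rightarrow> bool" where
  "regular_on A L \<longleftrightarrow>
     (\<exists>(Q::nat set) q0 F (\<delta>::nat \<Rightarrow> 'c \<Rightarrow> nat).
        finite Q \<and> q0 \<in> Q \<and> F \<subseteq> Q \<and>
        (\<forall>q\<in>Q. \<forall>c\<in>A. \<delta> q c \<in> Q) \<and>
        L = {u \<in> lists A. fold (\<lambda>c q. \<delta> q c) u q0 \<in> F})"

text \<open>A simple transduction over input alphabet A: f = sum of L_i |> w_i,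
  with pairwise disjoint regular L_i over A and |w_i| <= 1.\<close>

definition simple_transduction :: "'c set \<Rightarrow> ('c list \<Rightarrow> 'g list option) \<Rightarrow> bool" where
  "simple_transduction A f \<longleftrightarrow>
     (\<exists>(n::nat) (L :: nat \<Rightarrow> 'c list set) (w :: nat \<Rightarrow> 'g list).
        (\<forall>i<n. regular_on A (L i)) \<and>
        (\<forall>i<n. \<forall>j<n. i \<noteq> j \<longrightarrow> L i \<inter> L j = {}) \<and>
        (\<forall>i<n. length (w i) \<le> 1) \<and>
        (\<forall>i<n. \<forall>u\<in>L i. f u = Some (w i)) \<and>
        (\<forall>u. (\<forall>i<n. u \<notin> L i) \<longrightarrow> f u = None))"

definition ordered_alphabet :: "nat set \<Rightarrow> (nat \<times> nat) set \<Rightarrow> bool" where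
  "ordered_alphabet B R \<longleftrightarrow> finite B \<and> R \<subseteq> B \<times> B \<and> strict_linear_order_on B R"

text \<open>Extension of the order to B^n, most significant letter on the right.\<close>

definition lex_right :: "('b \<times> 'b) set \<Rightarrow> 'b list \<Rightarrow> 'b list \<Rightarrow> bool" where
  "lex_right R u v \<longleftrightarrow> length u = length v \<and>
     (\<exists>i<length u. (u ! i, v ! i) \<in> R \<and>
        (\<forall>j. i < j \<and> j < length u \<longrightarrow> u ! j = v ! j))"

definition words_of_length :: "'b set \<Rightarrow> nat \<Rightarrow> 'b list set" where
  "words_of_length B n = {b. length b = n \<and> set b \<subseteq> B}"

definition lex_enum :: "'b set \<Rightarrow> ('b \<times> 'b) set \<Rightarrow> nat \<Rightarrow> 'b list list" where
  "lex_enum B R n =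
     (THE bs. sorted_wrt (lex_right R) bs \<and> set bs = words_of_length B n)"

definition maplex ::
  "'b set \<Rightarrow> ('b \<times> 'b) set \<Rightarrow> (('a \<times> 'b) list \<Rightarrow> 'g list option)
     \<Rightarrow> 'a list \<Rightarrow> 'g list option" where
  "maplex B R f u =
     (let rs = map (\<lambda>b. f (zip u b)) (lex_enum B R (length u))
      in if None \<in> set rs then None else Some (concat (map the rs)))"

definition Lex1 :: "('a list \<Rightarrow> 'g list option) set" where
  "Lex1 = {g. \<exists>(B::nat set) R (f :: ('a \<times> nat) list \<Rightarrow> 'g list option).
              ordered_alphabet B R \<and>
              simple_transduction (UNIV \<times> B) f \<and>
              g = maplex B R f}"

end

theory Submission
  imports Defs
begin

text \<open>Let K bound the lengths of the outputs \<open>\<mu> q a\<close> and take the digits 0 < 1 < ... < K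
  as ordered alphabet. Among the words b of length |u|, those with a single nonzero digit k,
  at position i, are enumerated by maplex in the order of (i, k) with i most significant.
  Let f(u \<otimes> b) be the k-th letter of the output emitted at step i of the run on u, or the
  empty word if there is no such letter or b has several nonzero digits; f is defined
  exactly when the run accepts. Then maplex f concatenates the outputs of all steps in
  order, which is the output of the transducer. And f is simple, since a finite automaton
  reading u \<otimes> b can run the transducer alongside the digits.\<close>

lemma concat_map_concat: "concat (map f (concat xss)) = concat (map (\<lambda>xs. concat (map f xs)) xss)"
  by (induction xss) auto

lemma concat_map_take_drop: "concat (map (\<lambda>i. take 1 (drop i xs)) [0..<n]) = take n xs"
proof (induction n)
  case (Suc n)
  have "take (Suc n) xs = take n xs @ take 1 (drop n xs)"
    using take_add[of n 1 xs] by simp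
  then show ?case using Suc.IH by simp
qed simp

lemma concat_map_if_eq:
  assumes "distinct xs" "r \<in> set xs"
  shows "concat (map (\<lambda>x. if x = r then ys else []) xs) = ys"
  using assms by (induction xs) auto

lemma sorted_wrt_concat_map:
  assumes "\<And>k. k \<in> set ks \<Longrightarrow> sorted_wrt P (g k)"
    and "sorted_wrt Q ks"
    and "\<And>k l x y. Q k l \<Longrightarrow> x \<in> set (g k) \<Longrightarrow> y \<in> set (g l) \<Longrightarrow> P x y"
  shows "sorted_wrt P (concat (map g ks))"
  using assms by (induction ks) (auto simp: sorted_wrt_append)

lemma sorted_wrt_asymp_unique:
  assumes "asymp P" "sorted_wrt P xs" "sorted_wrt P ys" "set xs = set ys"
  shows "xs = ys"
  using assms(2-4)
proof (induction xs arbitrary: ys)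
  case Nil
  then show ?case by simp
next
  case (Cons x xs)
  then obtain y ys' where ys: "ys = y # ys'" by (cases ys) auto
  have x_min: "P x z" if "z \<in> set xs" for z using Cons.prems(1) that by simp
  have y_min: "P y z" if "z \<in> set ys'" for z using Cons.prems(2) ys that by simp
  have "x = y"
  proof (rule ccontr)
    assume "x \<noteq> y"
    then have "x \<in> set ys'" "y \<in> set xs" using Cons.prems(3) ys by auto
    then show False using x_min y_min asympD[OF assms(1)] by blast
  qed
  moreover have "x \<notin> set xs" "y \<notin> set ys'"
    using x_min y_min asympD[OF assms(1)] by blast+
  ultimately have "set xs = set ys'" using Cons.prems(3) ys by auto
  then have "xs = ys'" using Cons.IH Cons.prems(1,2) ys by simp
  then show ?case using ys \<open>x = y\<close> by simp
qed

lemma fold_closed: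
  assumes "\<forall>s\<in>S. \<forall>c\<in>A. step c s \<in> S" "s \<in> S" "x \<in> lists A"
  shows "fold step x s \<in> S"
  using assms(2,3) by (induction x arbitrary: s) (auto simp: assms(1))

lemma regular_on_fold:
  fixes S :: "'s set"
  assumes fin: "finite S" and s0: "s0 \<in> S" and closed: "\<forall>s\<in>S. \<forall>c\<in>A. step c s \<in> S"
  shows "regular_on A {x \<in> lists A. fold step x s0 \<in> Acc}"
proof -
  obtain h :: "'s \<Rightarrow> nat" and m where h: "h ` S = {i. i < m}" "inj_on h S"
    using finite_imp_inj_to_nat_seg[OF fin] by blast
  define d where "d i c = h (step c (inv_into S h i))" for i c
  have fold_h: "fold (\<lambda>c i. d i c) x (h s) = h (fold step x s)" if "s \<in> S" "x \<in> lists A" for x s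
    using that by (induction x arbitrary: s) (auto simp: d_def h(2) closed)
  show ?thesis unfolding regular_on_def
  proof (intro exI conjI)
    show "finite (h ` S)" "h s0 \<in> h ` S" "h ` (S \<inter> Acc) \<subseteq> h ` S"
      using fin s0 by auto
    show "\<forall>i\<in>h ` S. \<forall>c\<in>A. d i c \<in> h ` S"
      using closed h(2) by (auto simp: d_def)
    show "{x \<in> lists A. fold step x s0 \<in> Acc} =
        {x \<in> lists A. fold (\<lambda>c i. d i c) x (h s0) \<in> h ` (S \<inter> Acc)}"
    proof (intro Collect_cong conj_cong refl)
      fix x assume "x \<in> lists A"
      then show "fold step x s0 \<in> Acc \<longleftrightarrow> fold (\<lambda>c i. d i c) x (h s0) \<in> h ` (S \<inter> Acc)"
        using fold_h[OF s0] fold_closed[OF closed s0] h(2) by (auto simp: inj_on_def)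
    qed
  qed
qed

lemma simple_transduction_fold:
  fixes out :: "'s \<Rightarrow> 'g list option"
  assumes fin: "finite S" and s0: "s0 \<in> S" and closed: "\<forall>s\<in>S. \<forall>c\<in>A. step c s \<in> S"
    and out_short: "\<And>s w. s \<in> S \<Longrightarrow> out s = Some w \<Longrightarrow> length w \<le> 1"
  shows "simple_transduction A (\<lambda>x. if x \<in> lists A then out (fold step x s0) else None)"
proof -
  obtain ws where ws: "set ws = {w. Some w \<in> out ` S}" "distinct ws"
    using finite_distinct_list[of "{w. Some w \<in> out ` S}"] fin
    by (metis finite_imageI finite_vimageI inj_Some vimage_def)
  define L where "L i = {x \<in> lists A. out (fold step x s0) = Some (ws ! i)}" for i
  show ?thesis unfolding simple_transduction_def
  proof (intro exI[of _ "length ws"] exI[of _ L] exI[of _ "(!) ws"] conjI allI impI ballI)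
    fix i assume i: "i < length ws"
    show "regular_on A (L i)"
      unfolding L_def using regular_on_fold[OF fin s0 closed, of "{s. out s = Some (ws ! i)}"] by simp
    show "length (ws ! i) \<le> 1" using i ws(1) nth_mem[OF i] out_short by force
  next
    fix i j assume "i < length ws" "j < length ws" "i \<noteq> j"
    then show "L i \<inter> L j = {}" using ws(2) by (auto simp: L_def nth_eq_iff_index_eq)
  next
    fix x assume none: "\<forall>i<length ws. x \<notin> L i"
    show "(if x \<in> lists A then out (fold step x s0) else None) = None"
    proof (cases "x \<in> lists A \<and> out (fold step x s0) \<noteq> None")
      case True
      then obtain w where x: "x \<in> lists A" and w: "out (fold step x s0) = Some w" by auto
      then have "w \<in> set ws" using ws(1) fold_closed[OF closed s0] by (metis image_eqI mem_Collect_eq)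
      then obtain i where "i < length ws" "ws ! i = w" by (auto simp: in_set_conv_nth)
      then show ?thesis using none x w by (auto simp: L_def)
    qed auto
  qed (auto simp: L_def)
qed

lemma lex_right_snoc_eq:
  assumes "lex_right R v w"
  shows "lex_right R (v @ [k]) (w @ [k])"
proof -
  obtain i where "length v = length w" "i < length v" "(v ! i, w ! i) \<in> R"
    "\<forall>j. i < j \<and> j < length v \<longrightarrow> v ! j = w ! j"
    using assms by (auto simp: lex_right_def)
  then show ?thesis
    unfolding lex_right_def by (auto simp: nth_append less_Suc_eq intro!: exI[of _ i])
qed

lemma lex_right_snoc_less:
  assumes "length v = length w" "(k, l) \<in> R"
  shows "lex_right R (v @ [k]) (w @ [l])"
  using assms unfolding lex_right_def by (auto simp: nth_append intro!: exI[of _ "length v"])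

lemma asymp_lex_right:
  assumes "asym R"
  shows "asymp (lex_right R)"
proof
  fix v w assume vw: "lex_right R v w"
  show "\<not> lex_right R w v"
  proof
    assume wv: "lex_right R w v"
    obtain i where i: "i < length v" "(v ! i, w ! i) \<in> R"
      "\<forall>j. i < j \<and> j < length v \<longrightarrow> v ! j = w ! j"
      using vw unfolding lex_right_def by blast
    obtain j where j: "j < length w" "(w ! j, v ! j) \<in> R"
      "\<forall>l. j < l \<and> l < length w \<longrightarrow> w ! l = v ! l"
      using wv unfolding lex_right_def by blast
    have "length v = length w" using vw by (simp add: lex_right_def)
    have irrefl: "(x, x) \<notin> R" for x using assms by (meson asymD)
    consider "i < j" | "i = j" | "j < i" by linarith
    then show False
    proof cases
      case 1
      then show False using i(3) j irrefl by (metis \<open>length v = length w\<close>)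
    next
      case 2
      then show False using i(2) j(2) assms by (meson asymD)
    next
      case 3
      then show False using j(3) i irrefl by (metis \<open>length v = length w\<close>)
    qed
  qed
qed

fun lex_words :: "'b list \<Rightarrow> nat \<Rightarrow> 'b list list" where
  "lex_words bs 0 = [[]]"
| "lex_words bs (Suc n) = concat (map (\<lambda>k. map (\<lambda>v. v @ [k]) (lex_words bs n)) bs)"

lemma set_lex_words: "set (lex_words bs n) = words_of_length (set bs) n"
proof (induction n)
  case 0
  then show ?case by (auto simp: words_of_length_def)
next
  case (Suc n)
  have "set (lex_words bs (Suc n)) = {v @ [k] | v k. k \<in> set bs \<and> v \<in> words_of_length (set bs) n}"
    using Suc.IH by auto
  also have "\<dots> = words_of_length (set bs) (Suc n)"
  proof (intro equalityI subsetI)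
    fix b assume "b \<in> words_of_length (set bs) (Suc n)"
    then show "b \<in> {v @ [k] | v k. k \<in> set bs \<and> v \<in> words_of_length (set bs) n}"
      by (cases b rule: rev_cases) (auto simp: words_of_length_def)
  qed (auto simp: words_of_length_def)
  finally show ?case .
qed

lemma length_lex_words: "v \<in> set (lex_words bs n) \<Longrightarrow> length v = n"
  by (simp add: set_lex_words words_of_length_def)

lemma sorted_lex_words:
  assumes "sorted_wrt (\<lambda>k l. (k, l) \<in> R) bs"
  shows "sorted_wrt (lex_right R) (lex_words bs n)"
proof (induction n)
  case 0
  then show ?case by simp
next
  case (Suc n)
  show ?case unfolding lex_words.simps
  proof (rule sorted_wrt_concat_map[OF _ assms])
    fix k
    have "sorted_wrt (\<lambda>v w. lex_right R (v @ [k]) (w @ [k])) (lex_words bs n)"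
      by (rule sorted_wrt_mono_rel[OF _ Suc.IH]) (rule lex_right_snoc_eq)
    then show "sorted_wrt (lex_right R) (map (\<lambda>v. v @ [k]) (lex_words bs n))"
      by (simp add: sorted_wrt_map)
  next
    fix k l x y assume "(k, l) \<in> R" "x \<in> set (map (\<lambda>v. v @ [k]) (lex_words bs n))"
      "y \<in> set (map (\<lambda>v. v @ [l]) (lex_words bs n))"
    then obtain v w where vw: "v \<in> set (lex_words bs n)" "w \<in> set (lex_words bs n)"
      and "x = v @ [k]" "y = w @ [l]" by auto
    moreover have "length v = length w" using length_lex_words[OF vw(1)] length_lex_words[OF vw(2)] by simp
    ultimately show "lex_right R x y" using lex_right_snoc_less[OF _ \<open>(k, l) \<in> R\<close>] by simp
  qed
qed

lemma distinct_lex_words: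
  assumes "asym R" "sorted_wrt (\<lambda>k l. (k, l) \<in> R) bs"
  shows "distinct (lex_words bs n)"
proof -
  have "distinct xs" if "sorted_wrt (lex_right R) xs" for xs
    using that asympD[OF asymp_lex_right[OF assms(1)]] by (induction xs) auto
  then show ?thesis using sorted_lex_words[OF assms(2)] by blast
qed

lemma lex_enum_eq_lex_words:
  assumes "asym R" "sorted_wrt (\<lambda>k l. (k, l) \<in> R) bs"
  shows "lex_enum (set bs) R n = lex_words bs n"
  unfolding lex_enum_def
proof (rule the_equality)
  show "sorted_wrt (lex_right R) (lex_words bs n) \<and> set (lex_words bs n) = words_of_length (set bs) n"
    using sorted_lex_words[OF assms(2)] set_lex_words by blast
  show "es = lex_words bs n" if "sorted_wrt (lex_right R) es \<and> set es = words_of_length (set bs) n" for es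
    using that sorted_wrt_asymp_unique[OF asymp_lex_right[OF assms(1)]]
      sorted_lex_words[OF assms(2)] set_lex_words by metis
qed

lemma maplex_eq_Some:
  assumes "\<And>b. b \<in> set (lex_enum B R (length u)) \<Longrightarrow> f (zip u b) = Some (g b)"
  shows "maplex B R f u = Some (concat (map g (lex_enum B R (length u))))"
  using assms by (auto simp: maplex_def Let_def cong: map_cong)

lemma maplex_eq_None:
  assumes "b \<in> set (lex_enum B R (length u))" "f (zip u b) = None"
  shows "maplex B R f u = None"
  using assms by (force simp: maplex_def)

definition digit_order :: "nat \<Rightarrow> (nat \<times> nat) set" where
  "digit_order K = {(k, l). k < l \<and> l \<le> K}"

lemma ordered_alphabet_digit_order: "ordered_alphabet {0..K} (digit_order K)"
  unfolding ordered_alphabet_def strict_linear_order_on_def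
  by (auto simp: digit_order_def trans_def irrefl_def total_on_def)

lemma asym_digit_order: "asym (digit_order K)"
  by (auto simp: digit_order_def)

lemma sorted_digits: "sorted_wrt (\<lambda>k l. (k, l) \<in> digit_order K) [0..<Suc K]"
  by (rule sorted_wrt_mono_rel[OF _ sorted_wrt_upt]) (auto simp: digit_order_def)

lemma lex_enum_digits: "lex_enum {0..K} (digit_order K) n = lex_words [0..<Suc K] n"
  using lex_enum_eq_lex_words[OF asym_digit_order sorted_digits]
  by (metis atLeastLessThanSuc_atLeastAtMost set_upt)

lemma seq_run_snoc:
  "seq_run \<delta> \<mu> q (x @ [a]) =
     (case seq_run \<delta> \<mu> q x of
        None \<Rightarrow> None
      | Some (p, w) \<Rightarrow> map_option (\<lambda>p'. (p', w @ \<mu> p a)) (\<delta> p a))"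
  by (induction x arbitrary: q) (auto split: option.split)

lemma seq_run_in_states:
  assumes "seq_transducer Q q0 F \<delta>" "q \<in> Q" "seq_run \<delta> \<mu> q x = Some (p, w)"
  shows "p \<in> Q"
  using assms(2,3)
proof (induction x arbitrary: q w)
  case (Cons a x)
  then obtain q' w' where "\<delta> q a = Some q'" "seq_run \<delta> \<mu> q' x = Some (p, w')"
    by (auto split: option.splits)
  moreover from this(1) have "q' \<in> Q"
    using Cons.prems(1) assms(1) by (auto simp: seq_transducer_def)
  ultimately show ?case using Cons.IH by blast
qed simp

text \<open>A state of the automaton reading \<open>u \<otimes> b\<close> holds the state of the transducer (None once
  its run is blocked), whether all digits read so far are 0, and the selected letter: a
  nonzero digit k preceded only by zeros selects the k-th letter of the current output, and
  any later nonzero digit discards it.\<close>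

definition lex_step ::
  "('q \<Rightarrow> 'a \<Rightarrow> 'q option) \<Rightarrow> ('q \<Rightarrow> 'a \<Rightarrow> 'g list) \<Rightarrow> 'a \<times> nat
     \<Rightarrow> 'q option \<times> bool \<times> 'g list \<Rightarrow> 'q option \<times> bool \<times> 'g list" where
  "lex_step \<delta> \<mu> = (\<lambda>(a, k) (qo, z, c).
     (Option.bind qo (\<lambda>q. \<delta> q a), z \<and> k = 0,
      if k = 0 then c
      else if z then (case qo of None \<Rightarrow> [] | Some q \<Rightarrow> take 1 (drop (k - 1) (\<mu> q a)))
      else []))"

definition lex_run ::
  "('q \<Rightarrow> 'a \<Rightarrow> 'q option) \<Rightarrow> ('q \<Rightarrow> 'a \<Rightarrow> 'g list) \<Rightarrow> 'q \<Rightarrow> 'a list \<Rightarrow> nat list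
     \<Rightarrow> 'q option \<times> bool \<times> 'g list" where
  "lex_run \<delta> \<mu> q x v = fold (lex_step \<delta> \<mu>) (zip x v) (Some q, True, [])"

abbreviation lex_letter ::
  "('q \<Rightarrow> 'a \<Rightarrow> 'q option) \<Rightarrow> ('q \<Rightarrow> 'a \<Rightarrow> 'g list) \<Rightarrow> 'q \<Rightarrow> 'a list \<Rightarrow> nat list
     \<Rightarrow> 'g list" where
  "lex_letter \<delta> \<mu> q x v \<equiv> snd (snd (lex_run \<delta> \<mu> q x v))"

lemma fst_fold_lex_step:
  "length v = length x \<Longrightarrow>
   fst (fold (lex_step \<delta> \<mu>) (zip x v) (qo, z, c)) = Option.bind qo (\<lambda>q. map_option fst (seq_run \<delta> \<mu> q x))"
  by (induction x arbitrary: v qo z c)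
    (auto simp: lex_step_def length_Suc_conv split: option.split bind_split)

lemma zeros_fold_lex_step:
  "length v = length x \<Longrightarrow>
   fst (snd (fold (lex_step \<delta> \<mu>) (zip x v) (qo, z, c))) = (z \<and> v = replicate (length x) 0)"
  by (induction x arbitrary: v qo z c) (auto simp: lex_step_def length_Suc_conv)

lemma lex_run_state:
  assumes "length v = length x" "seq_run \<delta> \<mu> q x = Some (p, w)"
  shows "lex_run \<delta> \<mu> q x v = (Some p, v = replicate (length x) 0, lex_letter \<delta> \<mu> q x v)"
  using fst_fold_lex_step[OF assms(1), of \<delta> \<mu> "Some q"] zeros_fold_lex_step[OF assms(1), of \<delta> \<mu> "Some q"] assms(2)
  by (simp add: lex_run_def prod_eq_iff)

lemma lex_letter_snoc:
  assumes "length v = length x" "seq_run \<delta> \<mu> q x = Some (p, w)"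
  shows "lex_letter \<delta> \<mu> q (x @ [a]) (v @ [k]) =
     (if k = 0 then lex_letter \<delta> \<mu> q x v
      else if v = replicate (length x) 0 then take 1 (drop (k - 1) (\<mu> p a)) else [])"
proof -
  have "lex_run \<delta> \<mu> q (x @ [a]) (v @ [k]) = lex_step \<delta> \<mu> (a, k) (lex_run \<delta> \<mu> q x v)"
    using assms(1) by (simp add: lex_run_def)
  also have "\<dots> = lex_step \<delta> \<mu> (a, k) (Some p, v = replicate (length x) 0, lex_letter \<delta> \<mu> q x v)"
    using lex_run_state[OF assms] by simp
  finally show ?thesis by (simp add: lex_step_def)
qed

lemma concat_lex_letters:
  assumes "seq_transducer Q q0 F \<delta>" "\<And>q a. q \<in> Q \<Longrightarrow> length (\<mu> q a) \<le> K"
    and "seq_run \<delta> \<mu> q0 x = Some (p, w)"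
  shows "concat (map (lex_letter \<delta> \<mu> q0 x) (lex_words [0..<Suc K] (length x))) = w"
  using assms(3)
proof (induction x arbitrary: p w rule: rev_induct)
  case Nil
  then show ?case by (simp add: lex_run_def)
next
  case (snoc a x)
  define E where "E = lex_words [0..<Suc K] (length x)"
    obtain p' w' where run: "seq_run \<delta> \<mu> q0 x = Some (p', w')" and w: "w = w' @ \<mu> p' a"
    using snoc.prems by (auto simp: seq_run_snoc split: option.splits)
  have "p' \<in> Q" using seq_run_in_states[OF assms(1) _ run] assms(1) by (simp add: seq_transducer_def)
  have len: "length v = length x" if "v \<in> set E" for v
    using that length_lex_words by (simp add: E_def)
  have zero_block: "concat (map (\<lambda>v. lex_letter \<delta> \<mu> q0 (x @ [a]) (v @ [0])) E) = w'"
    using snoc.IH[OF run] lex_letter_snoc[OF len run] by (simp add: E_def cong: map_cong)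
  have letter_block: "concat (map (\<lambda>v. lex_letter \<delta> \<mu> q0 (x @ [a]) (v @ [Suc i])) E) =
      take 1 (drop i (\<mu> p' a))" for i
  proof -
    have "replicate (length x) 0 \<in> set E"
      by (auto simp: E_def set_lex_words words_of_length_def)
    moreover have "distinct E"
      unfolding E_def by (rule distinct_lex_words[OF asym_digit_order sorted_digits])
    moreover have "map (\<lambda>v. lex_letter \<delta> \<mu> q0 (x @ [a]) (v @ [Suc i])) E =
        map (\<lambda>v. if v = replicate (length x) 0 then take 1 (drop i (\<mu> p' a)) else []) E"
      using lex_letter_snoc[OF len run] by simp
    ultimately show ?thesis using concat_map_if_eq by metis
  qed
  have "concat (map (lex_letter \<delta> \<mu> q0 (x @ [a])) (lex_words [0..<Suc K] (length (x @ [a])))) =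
      concat (map (\<lambda>k. concat (map (\<lambda>v. lex_letter \<delta> \<mu> q0 (x @ [a]) (v @ [k])) E)) [0..<Suc K])"
    unfolding E_def length_append_singleton lex_words.simps(2) concat_map_concat
    by (simp add: comp_def del: upt_Suc)
  also have "\<dots> = w' @ take K (\<mu> p' a)"
    by (simp only: map_upt_Suc zero_block letter_block concat_map_take_drop concat.simps)
  also have "\<dots> = w" using assms(2)[OF \<open>p' \<in> Q\<close>] w by simp
  finally show ?case .
qed

definition lex_output :: "'q set \<Rightarrow> 'q option \<times> bool \<times> 'g list \<Rightarrow> 'g list option" where
  "lex_output F s = (case s of (Some p, _, c) \<Rightarrow> if p \<in> F then Some c else None | _ \<Rightarrow> None)"

definition lex_transduction ::
  "'q \<Rightarrow> 'q set \<Rightarrow> ('q \<Rightarrow> 'a \<Rightarrow> 'q option) \<Rightarrow> ('q \<Rightarrow> 'a \<Rightarrow> 'g list) \<Rightarrow> nat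
     \<Rightarrow> ('a \<times> nat) list \<Rightarrow> 'g list option" where
  "lex_transduction q0 F \<delta> \<mu> K y =
     (if y \<in> lists (UNIV \<times> {0..K}) then lex_output F (fold (lex_step \<delta> \<mu>) y (Some q0, True, [])) else None)"

lemma simple_lex_transduction:
  fixes \<mu> :: "'q \<Rightarrow> 'a \<Rightarrow> 'g::finite list"
  assumes "seq_transducer Q q0 F \<delta>"
  shows "simple_transduction (UNIV \<times> {0..K}) (lex_transduction q0 F \<delta> \<mu> K)"
  unfolding lex_transduction_def
proof (rule simple_transduction_fold)
  let ?S = "insert None (Some ` Q) \<times> (UNIV :: bool set) \<times> {c :: 'g list. length c \<le> 1}"
  have "finite {c :: 'g list. length c \<le> 1}"
    using finite_lists_length_le[of "UNIV :: 'g set" 1] by simp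
  then show "finite ?S" using assms by (simp add: seq_transducer_def finite_cartesian_product)
  show "(Some q0, True, []) \<in> ?S" using assms by (simp add: seq_transducer_def)
  show "\<forall>s\<in>?S. \<forall>c\<in>UNIV \<times> {0..K}. lex_step \<delta> \<mu> c s \<in> ?S"
  proof (intro ballI)
    fix s and c :: "'a \<times> nat" assume "s \<in> ?S" "c \<in> UNIV \<times> {0..K}"
    moreover have closed: "\<delta> q a \<in> Some ` Q" if "q \<in> Q" "\<delta> q a \<noteq> None" for q a
      using that assms by (auto simp: seq_transducer_def)
    ultimately show "lex_step \<delta> \<mu> c s \<in> ?S"
      by (auto simp: lex_step_def split: option.split) (use closed in blast)
  qed
  show "length c \<le> 1" if "s \<in> ?S" "lex_output F s = Some c" for s c
    using that by (auto simp: lex_output_def split: option.splits if_splits)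
qed

lemma lex_transduction_zip:
  assumes "length b = length u" "set b \<subseteq> {0..K}"
  shows "lex_transduction q0 F \<delta> \<mu> K (zip u b) =
    map_option (\<lambda>_. lex_letter \<delta> \<mu> q0 u b) (seq_transduction q0 F \<delta> \<mu> u)"
proof -
  have "zip u b \<in> lists (UNIV \<times> {0..K})" using assms(2) by (auto dest: set_zip_rightD)
  moreover have "fst (lex_run \<delta> \<mu> q0 u b) = map_option fst (seq_run \<delta> \<mu> q0 u)"
    using fst_fold_lex_step[OF assms(1), of \<delta> \<mu> "Some q0"] by (simp add: lex_run_def)
  ultimately show ?thesis
    by (cases "lex_run \<delta> \<mu> q0 u b")
      (auto simp: lex_transduction_def lex_run_def[symmetric] lex_output_def seq_transduction_def split: option.splits)
qed

lemma seq_transduction_eq_maplex: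
  assumes "seq_transducer Q q0 F \<delta>" "\<And>q a. q \<in> Q \<Longrightarrow> length (\<mu> q a) \<le> K"
  shows "seq_transduction q0 F \<delta> \<mu> = maplex {0..K} (digit_order K) (lex_transduction q0 F \<delta> \<mu> K)"
proof -
  have "seq_transduction q0 F \<delta> \<mu> u = maplex {0..K} (digit_order K) (lex_transduction q0 F \<delta> \<mu> K) u"
    for u
  proof -
    let ?E = "lex_enum {0..K} (digit_order K) (length u)"
    have transduction: "lex_transduction q0 F \<delta> \<mu> K (zip u b) =
        map_option (\<lambda>_. lex_letter \<delta> \<mu> q0 u b) (seq_transduction q0 F \<delta> \<mu> u)"
      if "b \<in> set ?E" for b
    proof (rule lex_transduction_zip)
      show "length b = length u" "set b \<subseteq> {0..K}"
        using that by (auto simp: lex_enum_digits set_lex_words words_of_length_def)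
    qed
    show ?thesis
    proof (cases "seq_transduction q0 F \<delta> \<mu> u")
      case None
      have "replicate (length u) 0 \<in> set ?E"
        by (auto simp: lex_enum_digits set_lex_words words_of_length_def)
      moreover from this have "lex_transduction q0 F \<delta> \<mu> K (zip u (replicate (length u) 0)) = None"
        using transduction None by simp
      ultimately show ?thesis using None by (simp add: maplex_eq_None)
    next
      case (Some w)
      then obtain p where "seq_run \<delta> \<mu> q0 u = Some (p, w)"
        by (auto simp: seq_transduction_def split: option.splits if_splits)
      then have "concat (map (lex_letter \<delta> \<mu> q0 u) ?E) = w"
        using concat_lex_letters[OF assms] by (simp add: lex_enum_digits)
      moreover have "maplex {0..K} (digit_order K) (lex_transduction q0 F \<delta> \<mu> K) u =
          Some (concat (map (lex_letter \<delta> \<mu> q0 u) ?E))"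
        by (rule maplex_eq_Some) (simp add: transduction Some)
      ultimately show ?thesis using Some by simp
    qed
  qed
  then show ?thesis by blast
qed

theorem mainTheorem7:
  fixes Q :: "'q set" and q0 :: 'q and F :: "'q set"
    and \<delta> :: "'q \<Rightarrow> 'a::finite \<Rightarrow> 'q option"
    and \<mu> :: "'q \<Rightarrow> 'a \<Rightarrow> 'g::finite list"
  assumes "seq_transducer Q q0 F \<delta>"
  shows "seq_transduction q0 F \<delta> \<mu> \<in> Lex1"
proof -
  define K where "K = Max ((\<lambda>(q, a). length (\<mu> q a)) ` (Q \<times> UNIV))"
  have "finite (Q \<times> (UNIV :: 'a set))" using assms by (simp add: seq_transducer_def)
  then have "length (\<mu> q a) \<le> K" if "q \<in> Q" for q a
    unfolding K_def using that by (intro Max_ge) force+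
  then have "seq_transduction q0 F \<delta> \<mu> = maplex {0..K} (digit_order K) (lex_transduction q0 F \<delta> \<mu> K)"
    by (rule seq_transduction_eq_maplex[OF assms])
  then show ?thesis
    unfolding Lex1_def
    using ordered_alphabet_digit_order simple_lex_transduction[OF assms] by blast
qed

end
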